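(* Let $V:\mathcal{H}_L\otimes\mathcal{H}_J\to\mathcal{H}_p$ be the encoding isometry of a subsystem code on a physical system consisting of a collection of subsystems, and let $R$ be a correctable region. Then every dressed-CSP operator $A$ supported on $R$ implements a logical operation of the form $\mathrm{Id}_L\otimes A_J$ for some $A_J\in\mathcal{B}(\mathcal{H}_J)$.
   Context: $\Pi=VV^\dagger$. An operator $A$ on $\mathcal{H}_p$ is codespace-preserving (CSP) if $[A,\Pi]=0$; dressed-CSP if moreover $V^\dagger AV=A_L\otimes A_J$ for some $A_L\in\mathcal{B}(\mathcal{H}_L)$, $A_J\in\mathcal{B}(\mathcal{H}_J)$ (then $A$ implements $A_L\otimes A_J$); bare-CSP if moreover $A_J=\mathrm{Id}_J$. A region $R$ is a set of physical subsystems; $A$ is supported on $R$ if $A=A_R\otimes\mathrm{Id}_{R^c}$. $R$ is correctable if for every $A_L\in\mathcal{B}(\mathcal{H}_L)$ there is a bare-CSP operator supported on $R^c$ implementing $A_L\otimes\mathrm{Id}_J$. *)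

theory Defs
  imports Complex_Main "HOL-Library.FuncSet"
begin

(* The physical system consists of finitely many
   subsystems (sites, a finite type 's); site i has orthonormal basis indexed by
   the finite nonempty set D i.  The physical Hilbert space H_p has orthonormal
   basis the configurations phys D = Pi_E UNIV D.  Operators are matrices w.r.t.
   these bases (only their entries on the relevant basis sets matter).
   H_L, H_J have orthonormal bases indexed by finite types 'l, 'j. *)

type_synonym ('s,'b) pop = "('s \<Rightarrow> 'b) \<Rightarrow> ('s \<Rightarrow> 'b) \<Rightarrow> complex"
type_synonym ('l,'j) lop = "('l \<times> 'j) \<Rightarrow> ('l \<times> 'j) \<Rightarrow> complex"

definition phys :: "('s \<Rightarrow> 'b set) \<Rightarrow> ('s \<Rightarrow> 'b) set" where
  "phys D = PiE UNIV D"

definition pop_eq :: "('s \<Rightarrow> 'b set) \<Rightarrow> ('s,'b) pop \<Rightarrow> ('s,'b) pop \<Rightarrow> bool" where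
  "pop_eq D A B \<longleftrightarrow> (\<forall>x\<in>phys D. \<forall>y\<in>phys D. A x y = B x y)"

definition pmult :: "('s \<Rightarrow> 'b set) \<Rightarrow> ('s,'b) pop \<Rightarrow> ('s,'b) pop \<Rightarrow> ('s,'b) pop" where
  "pmult D A B = (\<lambda>x y. \<Sum>z\<in>phys D. A x z * B z y)"

definition isometry :: "('s \<Rightarrow> 'b set) \<Rightarrow> (('s \<Rightarrow> 'b) \<Rightarrow> ('l::finite \<times> 'j::finite) \<Rightarrow> complex) \<Rightarrow> bool" where
  "isometry D V \<longleftrightarrow>
     (\<forall>a b. (\<Sum>x\<in>phys D. cnj (V x a) * V x b) = (if a = b then 1 else 0))"

definition code_proj :: "(('s \<Rightarrow> 'b) \<Rightarrow> ('l::finite \<times> 'j::finite) \<Rightarrow> complex) \<Rightarrow> ('s,'b) pop" where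
  "code_proj V = (\<lambda>x y. \<Sum>a\<in>UNIV. V x a * cnj (V y a))"

definition enc_conj :: "('s \<Rightarrow> 'b set) \<Rightarrow> (('s \<Rightarrow> 'b) \<Rightarrow> ('l \<times> 'j) \<Rightarrow> complex) \<Rightarrow> ('s,'b) pop \<Rightarrow> ('l,'j) lop" where
  "enc_conj D V A = (\<lambda>a b. \<Sum>x\<in>phys D. \<Sum>y\<in>phys D. cnj (V x a) * A x y * V y b)"

definition id_op :: "'a \<Rightarrow> 'a \<Rightarrow> complex" where
  "id_op = (\<lambda>a b. if a = b then 1 else 0)"

definition tensor :: "('l \<Rightarrow> 'l \<Rightarrow> complex) \<Rightarrow> ('j \<Rightarrow> 'j \<Rightarrow> complex) \<Rightarrow> ('l,'j) lop" where
  "tensor AL AJ = (\<lambda>a b. AL (fst a) (fst b) * AJ (snd a) (snd b))"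

definition csp :: "('s \<Rightarrow> 'b set) \<Rightarrow> (('s \<Rightarrow> 'b) \<Rightarrow> ('l::finite \<times> 'j::finite) \<Rightarrow> complex) \<Rightarrow> ('s,'b) pop \<Rightarrow> bool" where
  "csp D V A \<longleftrightarrow> pop_eq D (pmult D A (code_proj V)) (pmult D (code_proj V) A)"

definition implements :: "('s \<Rightarrow> 'b set) \<Rightarrow> (('s \<Rightarrow> 'b) \<Rightarrow> ('l \<times> 'j) \<Rightarrow> complex) \<Rightarrow> ('s,'b) pop \<Rightarrow> ('l,'j) lop \<Rightarrow> bool" where
  "implements D V A M \<longleftrightarrow> enc_conj D V A = M"

definition dressed_csp :: "('s \<Rightarrow> 'b set) \<Rightarrow> (('s \<Rightarrow> 'b) \<Rightarrow> ('l::finite \<times> 'j::finite) \<Rightarrow> complex) \<Rightarrow> ('s,'b) pop \<Rightarrow> bool" where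
  "dressed_csp D V A \<longleftrightarrow> csp D V A \<and> (\<exists>AL AJ. implements D V A (tensor AL AJ))"

definition bare_csp :: "('s \<Rightarrow> 'b set) \<Rightarrow> (('s \<Rightarrow> 'b) \<Rightarrow> ('l::finite \<times> 'j::finite) \<Rightarrow> complex) \<Rightarrow> ('s,'b) pop \<Rightarrow> bool" where
  "bare_csp D V A \<longleftrightarrow> csp D V A \<and> (\<exists>AL. implements D V A (tensor AL id_op))"

(* A = A_R \<otimes> Id_{R^c}: matrix entries factor through the restriction to R and
   are diagonal on the complement of R *)
definition supported_on :: "('s \<Rightarrow> 'b set) \<Rightarrow> 's set \<Rightarrow> ('s,'b) pop \<Rightarrow> bool" where
  "supported_on D R A \<longleftrightarrow>
     (\<exists>AR :: ('s \<Rightarrow> 'b) \<Rightarrow> ('s \<Rightarrow> 'b) \<Rightarrow> complex.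
        \<forall>x\<in>phys D. \<forall>y\<in>phys D.
          A x y = (if (\<forall>i\<in>-R. x i = y i) then AR (restrict x R) (restrict y R) else 0))"

definition correctable :: "('s \<Rightarrow> 'b set) \<Rightarrow> (('s \<Rightarrow> 'b) \<Rightarrow> ('l::finite \<times> 'j::finite) \<Rightarrow> complex) \<Rightarrow> 's set \<Rightarrow> bool" where
  "correctable D V R \<longleftrightarrow>
     (\<forall>AL :: 'l \<Rightarrow> 'l \<Rightarrow> complex. \<exists>B :: ('s,'b) pop.
        supported_on D (-R) B \<and> bare_csp D V B \<and> implements D V B (tensor AL id_op))"

end

theory Submission
  imports Defs
begin

(* Correctability lets every logical operator BL \<otimes> Id be implemented by a bare-CSP
   operator B supported on the complement of R.  Operators with disjoint supports
   commute, and for a codespace-preserving A the encoding is multiplicative,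
   V\<^sup>\<dagger>(AB)V = (V\<^sup>\<dagger>AV)(V\<^sup>\<dagger>BV).  Hence AL \<otimes> AJ commutes with every BL \<otimes> Id, so
   (unless AJ = 0) AL commutes with every matrix and is a scalar, which can be moved
   onto AJ. *)

definition mat_mul ::
    "'c set \<Rightarrow> ('a \<Rightarrow> 'c \<Rightarrow> complex) \<Rightarrow> ('c \<Rightarrow> 'b \<Rightarrow> complex) \<Rightarrow> 'a \<Rightarrow> 'b \<Rightarrow> complex"
  where "mat_mul S M N = (\<lambda>x y. \<Sum>z\<in>S. M x z * N z y)"

definition adjoint :: "('x \<Rightarrow> 'a \<Rightarrow> complex) \<Rightarrow> 'a \<Rightarrow> 'x \<Rightarrow> complex"
  where "adjoint V = (\<lambda>a x. cnj (V x a))"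

lemma mat_mul_assoc:
  assumes "finite S" "finite T"
  shows "mat_mul S (mat_mul T M N) K = mat_mul T M (mat_mul S N K)"
  unfolding mat_mul_def
  by (intro ext, simp add: sum_distrib_left sum_distrib_right mult.assoc, rule sum.swap)

lemma mat_mul_cong_inner:
  assumes "\<forall>x\<in>S. \<forall>y\<in>S. X x y = Y x y"
  shows "mat_mul S M (mat_mul S X N) = mat_mul S M (mat_mul S Y N)"
  unfolding mat_mul_def using assms by (intro ext sum.cong refl arg_cong2[where f = "(*)"]) auto

lemma mat_mul_id_op_left [simp]: "mat_mul (UNIV :: 'a::finite set) id_op M = M"
  by (simp add: mat_mul_def id_op_def if_distrib[of "\<lambda>c. c * _"] cong: if_cong)

lemma mat_mul_id_op_right [simp]: "mat_mul (UNIV :: 'a::finite set) M id_op = M"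
  by (simp add: mat_mul_def id_op_def if_distrib[of "\<lambda>c. _ * c"] cong: if_cong)

lemma mat_mul_tensor:
  "mat_mul (UNIV :: ('l::finite \<times> 'j::finite) set) (tensor A1 A2) (tensor B1 B2)
     = tensor (mat_mul UNIV A1 B1) (mat_mul UNIV A2 B2)"
  unfolding mat_mul_def tensor_def
  by (intro ext, simp add: sum_product mult_ac sum.cartesian_product' UNIV_Times_UNIV[symmetric]
        del: UNIV_Times_UNIV, rule sum.swap)

lemma tensor_cancel_right:
  assumes "tensor L AJ = tensor L' AJ" and "AJ j k \<noteq> 0"
  shows "L = L'"
proof (intro ext)
  fix a b
  have "L a b * AJ j k = L' a b * AJ j k"
    using fun_cong[OF fun_cong[OF assms(1), of "(a, j)"], of "(b, k)"] by (simp add: tensor_def)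
  then show "L a b = L' a b" using assms(2) by simp
qed

lemma commuting_with_all_is_scalar:
  fixes L :: "'l::finite \<Rightarrow> 'l \<Rightarrow> complex"
  assumes "\<And>M. mat_mul UNIV L M = mat_mul UNIV M L"
  shows "\<exists>c. L = (\<lambda>a b. c * id_op a b)"
proof (intro exI[of _ "L undefined undefined"] ext)
  fix a b
  define unit :: "'l \<Rightarrow> 'l \<Rightarrow> 'l \<Rightarrow> 'l \<Rightarrow> complex"
    where "unit p q = (\<lambda>a b. if a = p \<and> b = q then 1 else 0)" for p q
  have unit_right: "mat_mul UNIV L (unit p q) a b = (if b = q then L a p else 0)" for p q a b
    by (simp add: mat_mul_def unit_def if_distrib[of "\<lambda>c. _ * c"] cong: if_cong)
  have unit_left: "mat_mul UNIV (unit p q) L a b = (if a = p then L q b else 0)" for p q a b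
    by (simp add: mat_mul_def unit_def if_distrib[of "\<lambda>c. c * _"] cong: if_cong)
  have commute: "mat_mul UNIV L (unit p q) a' b' = mat_mul UNIV (unit p q) L a' b'" for p q a' b'
    by (simp add: assms)
  show "L a b = L undefined undefined * id_op a b"
  proof (cases "a = b")
    case True
    then show ?thesis
      using commute[of a undefined a undefined] by (simp add: unit_left unit_right id_op_def)
  next
    case False
    then show ?thesis
      using commute[of b b a b] by (simp add: unit_left unit_right id_op_def)
  qed
qed

lemma finite_phys: "(\<And>i. finite (D i)) \<Longrightarrow> finite (phys (D :: 's::finite \<Rightarrow> 'b set))"
  unfolding phys_def by (intro finite_PiE) auto

lemma pmult_eq_mat_mul: "pmult D A B = mat_mul (phys D) A B"
  by (simp add: pmult_def mat_mul_def)

lemma code_proj_eq_mat_mul: "code_proj V = mat_mul UNIV V (adjoint V)"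
  by (simp add: code_proj_def mat_mul_def adjoint_def)

lemma enc_conj_eq_mat_mul: "enc_conj D V A = mat_mul (phys D) (mat_mul (phys D) (adjoint V) A) V"
  unfolding enc_conj_def mat_mul_def adjoint_def
  by (intro ext, simp add: sum_distrib_right, rule sum.swap)

lemma enc_conj_cong: "pop_eq D A A' \<Longrightarrow> enc_conj D V A = enc_conj D V A'"
  unfolding enc_conj_def pop_eq_def by (intro ext sum.cong refl) auto

lemma isometry_cancel:
  fixes V :: "('s \<Rightarrow> 'b) \<Rightarrow> ('l::finite \<times> 'j::finite) \<Rightarrow> complex"
  assumes "finite (phys D)" and "isometry D V"
  shows "mat_mul (phys D) (adjoint V) (mat_mul UNIV V X) = X"
proof -
  have "mat_mul (phys D) (adjoint V) V = id_op"
    using assms(2) unfolding isometry_def mat_mul_def adjoint_def id_op_def by (intro ext) blast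
  then show ?thesis using mat_mul_assoc[OF _ assms(1), of UNIV "adjoint V" V X] by simp
qed

(* (V\<^sup>\<dagger>AV)(V\<^sup>\<dagger>BV) = V\<^sup>\<dagger>A\<Pi>BV = V\<^sup>\<dagger>\<Pi>ABV = V\<^sup>\<dagger>ABV,
   since A commutes with \<Pi> = VV\<^sup>\<dagger> and V\<^sup>\<dagger>\<Pi> = V\<^sup>\<dagger>. *)

lemma enc_conj_pmult:
  fixes V :: "('s \<Rightarrow> 'b) \<Rightarrow> ('l::finite \<times> 'j::finite) \<Rightarrow> complex"
  assumes fin: "finite (phys D)" and iso: "isometry D V" and csp: "csp D V A"
  shows "enc_conj D V (pmult D A B) = mat_mul UNIV (enc_conj D V A) (enc_conj D V B)"
proof -
  let ?P = "phys D" and ?Pi = "mat_mul UNIV V (adjoint V)"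
  have "\<forall>x\<in>?P. \<forall>y\<in>?P. mat_mul ?P A ?Pi x y = mat_mul ?P ?Pi A x y"
    using csp by (simp add: csp_def pop_eq_def pmult_eq_mat_mul code_proj_eq_mat_mul)
  then have commute: "mat_mul ?P (adjoint V) (mat_mul ?P (mat_mul ?P A ?Pi) N)
      = mat_mul ?P (adjoint V) (mat_mul ?P (mat_mul ?P ?Pi A) N)"
    for N :: "_ \<Rightarrow> 'l \<times> 'j \<Rightarrow> complex"
    by (rule mat_mul_cong_inner)
  have "mat_mul UNIV (enc_conj D V A) (enc_conj D V B)
      = mat_mul ?P (adjoint V) (mat_mul ?P (mat_mul ?P A ?Pi) (mat_mul ?P B V))"
    by (simp add: enc_conj_eq_mat_mul mat_mul_assoc fin)
  also have "\<dots> = mat_mul ?P (adjoint V) (mat_mul ?P (mat_mul ?P ?Pi A) (mat_mul ?P B V))"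
    by (rule commute)
  also have "\<dots> = enc_conj D V (pmult D A B)"
    by (simp add: enc_conj_eq_mat_mul pmult_eq_mat_mul mat_mul_assoc fin
        isometry_cancel[OF fin iso])
  finally show ?thesis by (rule sym)
qed

lemma enc_conj_commute:
  fixes V :: "('s \<Rightarrow> 'b) \<Rightarrow> ('l::finite \<times> 'j::finite) \<Rightarrow> complex"
  assumes "finite (phys D)" "isometry D V" "csp D V A" "csp D V B"
    and "pop_eq D (pmult D A B) (pmult D B A)"
  shows "mat_mul UNIV (enc_conj D V A) (enc_conj D V B)
    = mat_mul UNIV (enc_conj D V B) (enc_conj D V A)"
  using assms enc_conj_pmult enc_conj_cong by metis

lemma pmult_eq_single_term:
  assumes "finite (phys D)" and "z \<in> phys D"
    and "\<And>w. w \<in> phys D \<Longrightarrow> w \<noteq> z \<Longrightarrow> M x w * N w y = 0"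
  shows "pmult D M N x y = M x z * N z y"
  using assms unfolding pmult_def by (subst sum.mono_neutral_right[of _ "{z}"]) auto

lemma glue_in_phys:
  "u \<in> phys D \<Longrightarrow> v \<in> phys D \<Longrightarrow> (\<lambda>i. if i \<in> S then u i else v i) \<in> phys D"
  by (auto simp: phys_def PiE_iff)

lemma pmult_eq_glued_term:
  assumes "finite (phys D)" and "x \<in> phys D" and "y \<in> phys D"
    and M: "\<And>w. w \<in> phys D \<Longrightarrow> \<exists>i\<in>-S. x i \<noteq> w i \<Longrightarrow> M x w = 0"
    and N: "\<And>w. w \<in> phys D \<Longrightarrow> \<exists>i\<in>S. w i \<noteq> y i \<Longrightarrow> N w y = 0"
  defines "z \<equiv> \<lambda>i. if i \<in> S then y i else x i"
  shows "pmult D M N x y = M x z * N z y"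
proof (rule pmult_eq_single_term[OF assms(1)])
  show "z \<in> phys D" unfolding z_def using assms(3,2) by (rule glue_in_phys)
  fix w assume w: "w \<in> phys D" "w \<noteq> z"
  then obtain i where i: "w i \<noteq> z i" by blast
  show "M x w * N w y = 0"
  proof (cases "i \<in> S")
    case True
    with i have "N w y = 0" by (intro N[OF w(1)] bexI[of _ i]) (auto simp: z_def)
    then show ?thesis by simp
  next
    case False
    with i have "M x w = 0" by (intro M[OF w(1)] bexI[of _ i]) (auto simp: z_def)
    then show ?thesis by simp
  qed
qed

lemma supported_on_compl_commute:
  assumes A: "supported_on D R A" and B: "supported_on D (-R) B"
  shows "pop_eq D (pmult D A B) (pmult D B A)"
proof (cases "finite (phys D)")
  case False
  then show ?thesis by (simp add: pop_eq_def pmult_def)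
next
  case fin: True
  obtain AR where AR: "\<And>x y. x \<in> phys D \<Longrightarrow> y \<in> phys D \<Longrightarrow>
      A x y = (if \<forall>i\<in>-R. x i = y i then AR (restrict x R) (restrict y R) else 0)"
    using A unfolding supported_on_def by blast
  obtain BR where BR: "\<And>x y. x \<in> phys D \<Longrightarrow> y \<in> phys D \<Longrightarrow>
      B x y = (if \<forall>i\<in>R. x i = y i then BR (restrict x (-R)) (restrict y (-R)) else 0)"
    using B unfolding supported_on_def by auto
  show ?thesis unfolding pop_eq_def
  proof (intro ballI)
    fix x y assume x: "x \<in> phys D" and y: "y \<in> phys D"
    let ?z = "\<lambda>i. if i \<in> R then y i else x i" and ?z' = "\<lambda>i. if i \<in> -R then y i else x i"
    have "pmult D A B x y = A x ?z * B ?z y"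
      by (intro pmult_eq_glued_term[OF fin x y]) (auto simp: AR BR x y)
    also have "\<dots> = AR (restrict x R) (restrict y R) * BR (restrict x (-R)) (restrict y (-R))"
      using glue_in_phys[OF y x, of R] by (simp add: AR BR x y restrict_def cong: if_cong)
    also have "\<dots> = B x ?z' * A ?z' y"
      using glue_in_phys[OF y x, of "-R", unfolded Compl_iff]
      by (simp add: AR BR x y restrict_def cong: if_cong)
    also have "\<dots> = pmult D B A x y"
      by (intro pmult_eq_glued_term[symmetric, OF fin x y]) (auto simp: AR BR x y)
    finally show "pmult D A B x y = pmult D B A x y" .
  qed
qed

lemma correctable_commutes_with_logical_part:
  fixes V :: "('s \<Rightarrow> 'b) \<Rightarrow> ('l::finite \<times> 'j::finite) \<Rightarrow> complex"
  assumes fin: "finite (phys D)" and iso: "isometry D V" and corr: "correctable D V R"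
    and cspA: "csp D V A" and suppA: "supported_on D R A"
    and A_impl: "enc_conj D V A = tensor AL AJ"
  shows "tensor (mat_mul UNIV AL BL) AJ = tensor (mat_mul UNIV BL AL) AJ"
proof -
  obtain B where suppB: "supported_on D (-R) B" and cspB: "csp D V B"
    and B_impl: "enc_conj D V B = tensor BL id_op"
    using corr[unfolded correctable_def, rule_format, of BL]
    unfolding bare_csp_def implements_def by (elim conjE exE)
  have "pop_eq D (pmult D A B) (pmult D B A)"
    using suppA suppB by (rule supported_on_compl_commute)
  then have "mat_mul UNIV (tensor AL AJ) (tensor BL id_op)
      = mat_mul UNIV (tensor BL id_op) (tensor AL AJ)"
    using enc_conj_commute[OF fin iso cspA cspB] by (simp only: A_impl B_impl)
  then show ?thesis by (simp add: mat_mul_tensor)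
qed

theorem lemma2:
  fixes D :: "'s::finite \<Rightarrow> 'b set"
    and V :: "('s \<Rightarrow> 'b) \<Rightarrow> ('l::finite \<times> 'j::finite) \<Rightarrow> complex"
    and R :: "'s set"
    and A :: "('s \<Rightarrow> 'b) \<Rightarrow> ('s \<Rightarrow> 'b) \<Rightarrow> complex"
  assumes "\<forall>i. finite (D i) \<and> D i \<noteq> {}"
    and "isometry D V"
    and "correctable D V R"
    and "dressed_csp D V A"
    and "supported_on D R A"
  shows "\<exists>AJ :: 'j \<Rightarrow> 'j \<Rightarrow> complex. implements D V A (tensor id_op AJ)"
proof -
  have fin: "finite (phys D)"
    using assms(1) by (intro finite_phys) blast
  obtain AL AJ where cspA: "csp D V A" and A_impl: "enc_conj D V A = tensor AL AJ"
    using assms(4) unfolding dressed_csp_def implements_def by (elim conjE exE)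
  show ?thesis
  proof (cases "\<exists>j k. AJ j k \<noteq> 0")
    case True
    then obtain j k where "AJ j k \<noteq> 0" by blast
    then have "mat_mul UNIV AL BL = mat_mul UNIV BL AL" for BL
      by (rule tensor_cancel_right[OF
            correctable_commutes_with_logical_part[OF fin assms(2,3) cspA assms(5) A_impl]])
    then obtain c where "AL = (\<lambda>a b. c * id_op a b)"
      using commuting_with_all_is_scalar by blast
    then show ?thesis
      by (auto simp: implements_def A_impl tensor_def fun_eq_iff
          intro!: exI[of _ "\<lambda>j k. c * AJ j k"])
  next
    case False
    then show ?thesis by (auto simp: implements_def A_impl tensor_def intro!: exI[of _ AJ])
  qed
qed

end
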